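(* Let $\mathcal A$ be an infinite alphabet and $\Delta$ a right-infinite word over $\mathcal A$ in which every letter $a\in\mathcal A$ occurs infinitely many times, and let $\omega=\psi(\Delta)$. Then for every $a\in\mathcal A$ the set $(a\omega)|_a=\{n\in\mathbb N:(a\omega)_n=a\}$ is a central set. Consequently $\{\omega|_a+1\}_{a\in\mathcal A}$ is an infinite partition of $\mathbb N\setminus\{0\}$ into central sets.
   Context: $\mathbb N=\{0,1,2,\dots\}$. For a finite word $w$, $w^{(+)}$ is the shortest palindrome having $w$ as a prefix; the iterated palindromic closure $\psi$ is defined by $\psi(\varepsilon)=\varepsilon$, $\psi(wa)=(\psi(w)a)^{(+)}$, and extended to infinite words by $\psi(\Delta)=\lim_n\psi(\Delta_0\cdots\Delta_n)$. For an infinite word $x$ and letter $a$, $x|_a=\{n\in\mathbb N:x_n=a\}$, $a\omega$ denotes the word $\omega$ preceded by the letter $a$, and $B+1=\{b+1:b\in B\}$. $\beta\mathbb N$ is the set of ultrafilters on $\mathbb N$ with addition $A\in p+q$ iff $\{n:A-n\in p\}\in q$ ($A-n=\{m:m+n\in A\}$); a minimal idempotent is a non-principal $p$ with $p+p=p$ in the smallest two-sided ideal of $\beta\mathbb N$; a set is central if it belongs to some minimal idempotent. *)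

theory Defs
  imports "HOL-Library.Sublist"
begin

definition is_pal :: "'a list \<Rightarrow> bool" where
  "is_pal w \<longleftrightarrow> rev w = w"

definition pal_closure :: "'a list \<Rightarrow> 'a list" where
  "pal_closure w = (ARG_MIN length p. is_pal p \<and> prefix w p)"

definition psi_fin :: "'a list \<Rightarrow> 'a list" where
  "psi_fin w = foldl (\<lambda>u a. pal_closure (u @ [a])) [] w"

definition psi_inf :: "(nat \<Rightarrow> 'a) \<Rightarrow> nat \<Rightarrow> 'a" where
  "psi_inf D k = (THE c. \<forall>\<^sub>F n in sequentially.
      k < length (psi_fin (map D [0..<Suc n])) \<and> psi_fin (map D [0..<Suc n]) ! k = c)"

definition prepend :: "'a \<Rightarrow> (nat \<Rightarrow> 'a) \<Rightarrow> nat \<Rightarrow> 'a" where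
  "prepend a x = (\<lambda>n. case n of 0 \<Rightarrow> a | Suc m \<Rightarrow> x m)"

definition occ :: "(nat \<Rightarrow> 'a) \<Rightarrow> 'a \<Rightarrow> nat set" where
  "occ x a = {n. x n = a}"

definition is_ultrafilter :: "nat set set \<Rightarrow> bool" where
  "is_ultrafilter U \<longleftrightarrow>
     {} \<notin> U \<and> UNIV \<in> U \<and>
     (\<forall>A B. A \<in> U \<longrightarrow> A \<subseteq> B \<longrightarrow> B \<in> U) \<and>
     (\<forall>A B. A \<in> U \<longrightarrow> B \<in> U \<longrightarrow> A \<inter> B \<in> U) \<and>
     (\<forall>A. A \<in> U \<or> - A \<in> U)"

definition betaN :: "nat set set set" where
  "betaN = {U. is_ultrafilter U}"

definition principal_uf :: "nat \<Rightarrow> nat set set" where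
  "principal_uf n = {A. n \<in> A}"

definition set_minus_nat :: "nat set \<Rightarrow> nat \<Rightarrow> nat set" where
  "set_minus_nat A n = {m. m + n \<in> A}"

definition uf_plus :: "nat set set \<Rightarrow> nat set set \<Rightarrow> nat set set" where
  "uf_plus p q = {A. {n. set_minus_nat A n \<in> p} \<in> q}"

definition two_sided_ideal :: "nat set set set \<Rightarrow> bool" where
  "two_sided_ideal I \<longleftrightarrow> I \<noteq> {} \<and> I \<subseteq> betaN \<and>
     (\<forall>p\<in>betaN. \<forall>q\<in>I. uf_plus p q \<in> I \<and> uf_plus q p \<in> I)"

definition K_betaN :: "nat set set set" where
  "K_betaN = \<Inter> {I. two_sided_ideal I}"

definition minimal_idempotent :: "nat set set \<Rightarrow> bool" where
  "minimal_idempotent p \<longleftrightarrow> p \<in> betaN \<and> (\<forall>n. p \<noteq> principal_uf n) \<and>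
     uf_plus p p = p \<and> p \<in> K_betaN"

definition central :: "nat set \<Rightarrow> bool" where
  "central A \<longleftrightarrow> (\<exists>p. minimal_idempotent p \<and> A \<in> p)"

end

theory Submission
  imports Defs "HOL-Library.Infinite_Set"
begin

text \<open>Every word \<open>a\<omega>\<close> is uniformly recurrent. Indeed \<open>\<omega>\<close> is: \<open>\<psi>(\<Delta>\<^sub>0\<cdots>\<Delta>\<^sub>k)\<close> is a palindrome
  having \<open>\<psi>(\<Delta>\<^sub>0\<cdots>\<Delta>\<^sub>k\<^sub>-\<^sub>1)\<close> as a prefix, hence as a suffix, and it is at most one letter longer
  than two copies of it, so every prefix of \<open>\<omega>\<close> recurs with gaps bounded by its length.
  Choosing \<open>n\<close> with \<open>\<Delta>\<^sub>n = a\<close>, the word \<open>a\<psi>(\<Delta>\<^sub>0\<cdots>\<Delta>\<^sub>n\<^sub>-\<^sub>1)\<close> is a suffix of the palindrome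
  \<open>\<psi>(\<Delta>\<^sub>0\<cdots>\<Delta>\<^sub>n)\<close>, so every prefix of \<open>a\<omega>\<close> occurs in \<open>\<omega>\<close>, and \<open>a\<omega>\<close> inherits uniform recurrence.

  For a uniformly recurrent binary word \<open>y\<close> with \<open>y 0\<close>, the set \<open>{n. y n}\<close> is central
  (Furstenberg): take \<open>p\<close> in a minimal closed right ideal \<open>R\<close> of \<open>\<beta>\<nat>\<close>; uniform recurrence gives
  \<open>r\<close> such that \<open>p + r\<close> lies in the closed subsemigroup \<open>Y\<close> of ultrafilters \<open>q\<close> with
  \<open>q-lim\<^sub>n y (n + k) = y k\<close> for all \<open>k\<close>; by the Ellis--Numakura lemma \<open>R \<inter> Y\<close> contains an
  idempotent, which lies in the smallest ideal and contains \<open>{n. y n}\<close>. The remaining claims hold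
  because \<open>\<omega>|\<^sub>a + 1 = (a\<omega>)|\<^sub>a - {0}\<close>, and removing a finite set from a central set keeps it central.\<close>

lemma Zorn_minimal:
  assumes "\<A> \<noteq> {}" and chain: "\<And>\<C>. \<C> \<noteq> {} \<Longrightarrow> subset.chain \<A> \<C> \<Longrightarrow> \<Inter>\<C> \<in> \<A>"
  shows "\<exists>M\<in>\<A>. \<forall>X\<in>\<A>. X \<subseteq> M \<longrightarrow> X = M"
proof -
  \<comment> \<open>Minimal elements of \<open>\<A>\<close> are the complements of maximal elements of \<open>uminus ` \<A>\<close>.\<close>
  have "\<exists>M\<in>uminus ` \<A>. \<forall>X\<in>uminus ` \<A>. M \<subseteq> X \<longrightarrow> X = M"
  proof (rule subset_Zorn_nonempty)
    show "uminus ` \<A> \<noteq> {}" using assms(1) by blast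
  next
    fix \<C> assume "\<C> \<noteq> {}" "subset.chain (uminus ` \<A>) \<C>"
    then have "uminus ` \<C> \<noteq> {}" "subset.chain \<A> (uminus ` \<C>)"
      unfolding subset.chain_def by (auto simp: image_subset_iff)
    then have "\<Inter>(uminus ` \<C>) \<in> \<A>" by (rule chain)
    moreover have "\<Union>\<C> = - \<Inter>(uminus ` \<C>)" by auto
    ultimately show "\<Union>\<C> \<in> uminus ` \<A>" by blast
  qed
  then obtain M' where "M' \<in> uminus ` \<A>" and maximal: "\<forall>X\<in>uminus ` \<A>. M' \<subseteq> X \<longrightarrow> X = M'" ..
  then obtain M where M: "M \<in> \<A>" "M' = - M" by blast
  have "X = M" if "X \<in> \<A>" "X \<subseteq> M" for X
    using maximal[rule_format, of "- X"] that M by auto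
  then show ?thesis using M(1) by blast
qed

section \<open>Ultrafilters on the natural numbers\<close>

lemma
  assumes "is_ultrafilter U"
  shows ultrafilter_empty_notin: "{} \<notin> U"
    and ultrafilter_UNIV: "UNIV \<in> U"
    and ultrafilter_mono: "A \<in> U \<Longrightarrow> A \<subseteq> B \<Longrightarrow> B \<in> U"
    and ultrafilter_Int: "A \<in> U \<Longrightarrow> B \<in> U \<Longrightarrow> A \<inter> B \<in> U"
    and ultrafilter_Compl_iff: "- A \<in> U \<longleftrightarrow> A \<notin> U"
  using assms unfolding is_ultrafilter_def by (blast, blast, blast, blast, metis Compl_disjoint)

lemma ultrafilter_Inter:
  assumes "is_ultrafilter U" "finite S" "S \<subseteq> U"
  shows "\<Inter>S \<in> U"
  using assms(2,3)
  by (induction S rule: finite_induct) (simp_all add: ultrafilter_UNIV ultrafilter_Int assms(1))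

lemma ultrafilter_subset_eq:
  assumes "is_ultrafilter U" "is_ultrafilter V" "U \<subseteq> V"
  shows "U = V"
  using assms ultrafilter_Compl_iff by blast

lemma ultrafilter_singleton_eq_principal:
  assumes "is_ultrafilter U" "{x} \<in> U"
  shows "U = principal_uf x"
proof (rule ultrafilter_subset_eq[symmetric])
  show "is_ultrafilter (principal_uf x)"
    unfolding is_ultrafilter_def principal_uf_def by auto
  show "principal_uf x \<subseteq> U"
    unfolding principal_uf_def using assms ultrafilter_mono by blast
qed fact

lemma nonprincipal_ultrafilter_finite_notin:
  assumes U: "is_ultrafilter U" and nonprincipal: "\<forall>n. U \<noteq> principal_uf n" and "finite A"
  shows "A \<notin> U"
  using \<open>finite A\<close>
proof (induction A rule: finite_induct)
  case empty
  show ?case using ultrafilter_empty_notin[OF U] .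
next
  case (insert x B)
  have "- {x} \<in> U"
    using ultrafilter_singleton_eq_principal[OF U] nonprincipal ultrafilter_Compl_iff[OF U] by blast
  then show ?case
    using insert.IH ultrafilter_Int[OF U] ultrafilter_mono[OF U, of "insert x B \<inter> - {x}" B] by blast
qed

definition finite_intersection_property :: "nat set set \<Rightarrow> bool" where
  "finite_intersection_property F \<longleftrightarrow> (\<forall>S. finite S \<longrightarrow> S \<subseteq> F \<longrightarrow> \<Inter>S \<noteq> {})"

lemma maximal_fip_is_ultrafilter:
  assumes fip: "finite_intersection_property M"
    and maximal: "\<And>A. finite_intersection_property (insert A M) \<Longrightarrow> A \<in> M"
  shows "is_ultrafilter M"
proof -
  have nonempty: "\<Inter>S \<noteq> {}" if "finite S" "S \<subseteq> M" for S
    using fip that unfolding finite_intersection_property_def by blast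
  have meets: "A \<in> M" if "\<And>S. finite S \<Longrightarrow> S \<subseteq> M \<Longrightarrow> \<Inter>S \<inter> A \<noteq> {}" for A
  proof (rule maximal, unfold finite_intersection_property_def, intro allI impI)
    fix S assume S: "finite S" "S \<subseteq> insert A M"
    have "\<Inter>(S - {A}) \<inter> A \<noteq> {}" using S by (intro that) auto
    moreover have "\<Inter>(S - {A}) \<inter> A \<subseteq> \<Inter>S" by blast
    ultimately show "\<Inter>S \<noteq> {}" by blast
  qed
  have closed: "A \<in> M" if S0: "finite S0" "S0 \<subseteq> M" "\<Inter>S0 \<subseteq> A" for S0 A
  proof (rule meets)
    fix S assume "finite S" "S \<subseteq> M"
    then have "\<Inter>(S \<union> S0) \<noteq> {}" using S0 by (intro nonempty) auto
    moreover have "\<Inter>(S \<union> S0) \<subseteq> \<Inter>S \<inter> A" using S0(3) by auto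
    ultimately show "\<Inter>S \<inter> A \<noteq> {}" by blast
  qed
  show ?thesis
    unfolding is_ultrafilter_def
  proof (intro conjI allI impI)
    show "{} \<notin> M" using nonempty[of "{{}}"] by auto
    show "UNIV \<in> M" using closed[of "{}"] by auto
    show "B \<in> M" if "A \<in> M" "A \<subseteq> B" for A B
      using closed[of "{A}"] that by auto
    show "A \<inter> B \<in> M" if "A \<in> M" "B \<in> M" for A B
      using closed[of "{A, B}"] that by auto
    fix A
    show "A \<in> M \<or> - A \<in> M"
    proof (rule disjCI)
      assume "- A \<notin> M"
      show "A \<in> M"
      proof (rule meets)
        fix S assume "finite S" "S \<subseteq> M"
        show "\<Inter>S \<inter> A \<noteq> {}"
        proof
          assume "\<Inter>S \<inter> A = {}"
          then have "\<Inter>S \<subseteq> - A" by blast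
          then show False using closed[OF \<open>finite S\<close> \<open>S \<subseteq> M\<close>] \<open>- A \<notin> M\<close> by blast
        qed
      qed
    qed
  qed
qed

lemma ultrafilter_extending_fip:
  assumes "finite_intersection_property F"
  obtains U where "is_ultrafilter U" "F \<subseteq> U"
proof -
  let ?\<A> = "{G. F \<subseteq> G \<and> finite_intersection_property G}"
  have "\<exists>M\<in>?\<A>. \<forall>X\<in>?\<A>. M \<subseteq> X \<longrightarrow> X = M"
  proof (rule subset_Zorn_nonempty)
    show "?\<A> \<noteq> {}" using assms by blast
  next
    fix \<C> assume "\<C> \<noteq> {}" and chain: "subset.chain ?\<A> \<C>"
    have "finite_intersection_property (\<Union>\<C>)"
      unfolding finite_intersection_property_def
    proof (intro allI impI)
      fix S assume "finite S" "S \<subseteq> \<Union>\<C>"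
      then obtain G where "G \<in> \<C>" "S \<subseteq> G"
        using finite_subset_Union_chain[OF _ _ \<open>\<C> \<noteq> {}\<close> chain] by blast
      moreover have "finite_intersection_property G"
        using chain \<open>G \<in> \<C>\<close> unfolding subset.chain_def by blast
      ultimately show "\<Inter>S \<noteq> {}"
        using \<open>finite S\<close> unfolding finite_intersection_property_def by blast
    qed
    moreover have "F \<subseteq> \<Union>\<C>"
      using \<open>\<C> \<noteq> {}\<close> chain unfolding subset.chain_def by blast
    ultimately show "\<Union>\<C> \<in> ?\<A>" by blast
  qed
  then obtain M where "M \<in> ?\<A>" and maximal: "\<forall>X\<in>?\<A>. M \<subseteq> X \<longrightarrow> X = M" ..
  then have M: "F \<subseteq> M" "finite_intersection_property M" by simp_all
  have "is_ultrafilter M"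
  proof (rule maximal_fip_is_ultrafilter[OF M(2)])
    fix A assume "finite_intersection_property (insert A M)"
    then have "insert A M = M" using M(1) using maximal by blast
    then show "A \<in> M" by blast
  qed
  then show thesis using M(1) that by blast
qed

section \<open>The semigroup \<open>\<beta>\<nat>\<close>\<close>

lemma betaN_iff: "p \<in> betaN \<longleftrightarrow> is_ultrafilter p"
  by (simp add: betaN_def)

lemma set_minus_nat_iff [simp]: "m \<in> set_minus_nat A n \<longleftrightarrow> m + n \<in> A"
  by (simp add: set_minus_nat_def)

lemma set_minus_nat_set_minus_nat: "set_minus_nat (set_minus_nat A n) m = set_minus_nat A (m + n)"
  by (auto simp: add.assoc)

lemma uf_plus_iff: "A \<in> uf_plus p q \<longleftrightarrow> {n. set_minus_nat A n \<in> p} \<in> q"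
  by (simp add: uf_plus_def)

lemma uf_plus_assoc: "uf_plus (uf_plus p q) r = uf_plus p (uf_plus q r)"
proof -
  have "{m. set_minus_nat (set_minus_nat A n) m \<in> p} = set_minus_nat {m. set_minus_nat A m \<in> p} n"
    for A n
    by (auto simp: set_minus_nat_set_minus_nat)
  then show ?thesis unfolding uf_plus_def by auto
qed

lemma uf_plus_betaN:
  assumes "p \<in> betaN" "q \<in> betaN"
  shows "uf_plus p q \<in> betaN"
proof -
  have P: "is_ultrafilter p" and Q: "is_ultrafilter q" using assms by (simp_all add: betaN_iff)
  have mono: "{n. set_minus_nat A n \<in> p} \<subseteq> {n. set_minus_nat B n \<in> p}" if "A \<subseteq> B" for A B
  proof -
    have "set_minus_nat A n \<subseteq> set_minus_nat B n" for n using that by auto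
    then show ?thesis using ultrafilter_mono[OF P] by blast
  qed
  have "set_minus_nat {} n = {}" "set_minus_nat UNIV n = UNIV" for n by auto
  then have "{n. set_minus_nat {} n \<in> p} = {}" "{n. set_minus_nat UNIV n \<in> p} = UNIV"
    using ultrafilter_empty_notin[OF P] ultrafilter_UNIV[OF P] by simp_all
  moreover have "{n. set_minus_nat (A \<inter> B) n \<in> p} = {n. set_minus_nat A n \<in> p} \<inter> {n. set_minus_nat B n \<in> p}"
    for A B
  proof -
    have "set_minus_nat (A \<inter> B) n = set_minus_nat A n \<inter> set_minus_nat B n" for n by auto
    then have "{n. set_minus_nat A n \<in> p} \<inter> {n. set_minus_nat B n \<in> p}
        \<subseteq> {n. set_minus_nat (A \<inter> B) n \<in> p}"
      using ultrafilter_Int[OF P] by auto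
    then show ?thesis using mono[of "A \<inter> B" A] mono[of "A \<inter> B" B] by blast
  qed
  moreover have "{n. set_minus_nat (- A) n \<in> p} = - {n. set_minus_nat A n \<in> p}" for A
  proof -
    have "set_minus_nat (- A) n = - set_minus_nat A n" for n by auto
    then show ?thesis using ultrafilter_Compl_iff[OF P] by auto
  qed
  ultimately have "is_ultrafilter (uf_plus p q)"
    unfolding is_ultrafilter_def uf_plus_iff
    using ultrafilter_empty_notin[OF Q] ultrafilter_UNIV[OF Q] ultrafilter_mono[OF Q, OF _ mono]
      ultrafilter_Int[OF Q] ultrafilter_Compl_iff[OF Q]
    by (metis (no_types, lifting))
  then show ?thesis by (simp add: betaN_iff)
qed

section \<open>Closed subsets of \<open>\<beta>\<nat>\<close>\<close>

definition beta_basic :: "nat set \<Rightarrow> nat set set set" where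
  "beta_basic A = {p \<in> betaN. A \<in> p}"

text \<open>Closedness in the Stone topology of \<open>\<beta>\<nat>\<close>, whose basic open sets are the \<open>beta_basic A\<close>.\<close>
definition beta_closed :: "nat set set set \<Rightarrow> bool" where
  "beta_closed C \<longleftrightarrow> C \<subseteq> betaN \<and> (\<forall>p\<in>betaN - C. \<exists>A\<in>p. \<forall>q\<in>C. A \<notin> q)"

lemma beta_closed_subset: "beta_closed C \<Longrightarrow> C \<subseteq> betaN"
  by (simp add: beta_closed_def)

lemma beta_closed_betaN: "beta_closed betaN"
  by (simp add: beta_closed_def)

lemma beta_closed_basic: "beta_closed (beta_basic A)"
  unfolding beta_closed_def beta_basic_def
  using ultrafilter_Compl_iff by (fastforce simp: betaN_iff)

lemma beta_closed_Inter:
  assumes "\<C> \<noteq> {}" "\<And>C. C \<in> \<C> \<Longrightarrow> beta_closed C"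
  shows "beta_closed (\<Inter>\<C>)"
  unfolding beta_closed_def
proof (intro conjI ballI)
  show "\<Inter>\<C> \<subseteq> betaN" using assms beta_closed_subset by blast
  fix p assume p: "p \<in> betaN - \<Inter>\<C>"
  then obtain C where C: "C \<in> \<C>" "p \<notin> C" by blast
  then obtain A where "A \<in> p" "\<forall>q\<in>C. A \<notin> q"
    using assms(2)[OF C(1)] p unfolding beta_closed_def by blast
  then show "\<exists>A\<in>p. \<forall>q\<in>\<Inter>\<C>. A \<notin> q" using C(1) by blast
qed

lemma beta_closed_Int:
  assumes "beta_closed C" "beta_closed D"
  shows "beta_closed (C \<inter> D)"
  using beta_closed_Inter[of "{C, D}"] assms by auto

lemma beta_closed_Inter_nonempty:
  assumes "\<C> \<noteq> {}" and closed: "\<And>C. C \<in> \<C> \<Longrightarrow> beta_closed C"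
    and finite_subfamilies: "\<And>\<D>. finite \<D> \<Longrightarrow> \<D> \<subseteq> \<C> \<Longrightarrow> \<D> \<noteq> {} \<Longrightarrow> \<Inter>\<D> \<noteq> {}"
  shows "\<Inter>\<C> \<noteq> {}"
proof -
  \<comment> \<open>A common point: any ultrafilter extending \<open>F\<close>.\<close>
  define F where "F = {A. \<exists>C\<in>\<C>. \<forall>q\<in>C. A \<in> q}"
  have "finite_intersection_property F"
    unfolding finite_intersection_property_def
  proof (intro allI impI)
    fix S assume "finite S" "S \<subseteq> F"
    then have "\<forall>A\<in>S. \<exists>C. C \<in> \<C> \<and> (\<forall>q\<in>C. A \<in> q)" unfolding F_def by blast
    from bchoice[OF this] obtain g where g: "\<And>A. A \<in> S \<Longrightarrow> g A \<in> \<C> \<and> (\<forall>q\<in>g A. A \<in> q)"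
      by blast
    show "\<Inter>S \<noteq> {}"
    proof (cases "S = {}")
      case False
      then have "\<Inter>(g ` S) \<noteq> {}"
        using finite_subfamilies[of "g ` S"] \<open>finite S\<close> g by blast
      then obtain q where q: "q \<in> \<Inter>(g ` S)" by blast
      with False obtain A0 where "A0 \<in> S" "q \<in> g A0" by blast
      then have "is_ultrafilter q"
        using closed g beta_closed_subset by (fastforce simp: betaN_iff)
      moreover have "S \<subseteq> q" using q g by blast
      ultimately show ?thesis
        using ultrafilter_Inter[of q S] ultrafilter_empty_notin[of q] \<open>finite S\<close> by force
    qed simp
  qed
  then obtain U where U: "is_ultrafilter U" "F \<subseteq> U" by (rule ultrafilter_extending_fip)
  have "U \<in> C" if C: "C \<in> \<C>" for C
  proof (rule ccontr)
    assume "U \<notin> C"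
    then obtain A where "A \<in> U" "\<forall>q\<in>C. A \<notin> q"
      using closed[OF C] U(1) unfolding beta_closed_def betaN_iff[symmetric] by blast
    then have "\<forall>q\<in>C. - A \<in> q"
      using closed[OF C] ultrafilter_Compl_iff beta_closed_subset by (fastforce simp: betaN_iff)
    then have "- A \<in> U" using C U(2) unfolding F_def by blast
    then show False using \<open>A \<in> U\<close> ultrafilter_Compl_iff[OF U(1)] by blast
  qed
  then show ?thesis by blast
qed

lemma beta_closed_chain_Inter_nonempty:
  assumes "\<C> \<noteq> {}" "subset.chain \<A> \<C>" "\<And>C. C \<in> \<C> \<Longrightarrow> beta_closed C \<and> C \<noteq> {}"
  shows "\<Inter>\<C> \<noteq> {}"
proof (rule beta_closed_Inter_nonempty)
  fix \<D> assume "finite \<D>" "\<D> \<subseteq> \<C>" "\<D> \<noteq> {}"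
  moreover have "subset.chain \<A> \<D>"
    using assms(2) \<open>\<D> \<subseteq> \<C>\<close> unfolding subset_chain_def by blast
  ultimately have "\<Inter>\<D> \<in> \<D>" by (intro Inter_in_chain) simp_all
  then show "\<Inter>\<D> \<noteq> {}" using assms(3) \<open>\<D> \<subseteq> \<C>\<close> by blast
qed (use assms in blast)+

lemma beta_closed_left_translate:
  assumes e: "e \<in> betaN" and M: "beta_closed M"
  shows "beta_closed (uf_plus e ` M)"
  unfolding beta_closed_def
proof (intro conjI ballI)
  have MB: "M \<subseteq> betaN" using M by (rule beta_closed_subset)
  then show "uf_plus e ` M \<subseteq> betaN" using uf_plus_betaN[OF e] by blast
  fix q assume q: "q \<in> betaN - uf_plus e ` M"
  then have Q: "is_ultrafilter q" by (simp add: betaN_iff)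
  show "\<exists>A\<in>q. \<forall>r\<in>uf_plus e ` M. A \<notin> r"
  proof (rule ccontr)
    assume "\<not> ?thesis"
    then have meets: "\<forall>A\<in>q. \<exists>m\<in>M. A \<in> uf_plus e m" by blast
    \<comment> \<open>\<open>C A\<close> is closed, as \<open>A \<in> uf_plus e m\<close> says \<open>{n. set_minus_nat A n \<in> e} \<in> m\<close>.\<close>
    define C where "C A = M \<inter> beta_basic {n. set_minus_nat A n \<in> e}" for A
    have C_iff: "m \<in> C A \<longleftrightarrow> m \<in> M \<and> A \<in> uf_plus e m" for m A
      using MB unfolding C_def beta_basic_def uf_plus_iff by blast
    have "\<Inter>(C ` q) \<noteq> {}"
    proof (rule beta_closed_Inter_nonempty)
      show "C ` q \<noteq> {}" using ultrafilter_UNIV[OF Q] by blast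
      show "beta_closed X" if "X \<in> C ` q" for X
        using that M beta_closed_basic beta_closed_Int unfolding C_def by blast
    next
      fix \<D> assume "finite \<D>" "\<D> \<subseteq> C ` q" "\<D> \<noteq> {}"
      then obtain S where S: "S \<subseteq> q" "finite S" "\<D> = C ` S"
        by (meson finite_subset_image)
      then have "\<Inter>S \<in> q" using ultrafilter_Inter[OF Q] by blast
      then obtain m where m: "m \<in> M" "\<Inter>S \<in> uf_plus e m" using meets by blast
      have "is_ultrafilter (uf_plus e m)" using uf_plus_betaN[OF e] m(1) MB by (auto simp: betaN_iff)
      then have "m \<in> C A" if "A \<in> S" for A
        using C_iff m that ultrafilter_mono[of "uf_plus e m" "\<Inter>S" A] by blast
      then show "\<Inter>\<D> \<noteq> {}" using S(3) by blast
    qed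
    then obtain m where "m \<in> M" "q \<subseteq> uf_plus e m" using C_iff ultrafilter_UNIV[OF Q] by blast
    moreover have "is_ultrafilter (uf_plus e m)" using uf_plus_betaN[OF e] \<open>m \<in> M\<close> MB by (auto simp: betaN_iff)
    ultimately have "q = uf_plus e m" using ultrafilter_subset_eq[OF Q] by blast
    then show False using q \<open>m \<in> M\<close> by blast
  qed
qed

lemma beta_closed_left_fixers:
  assumes e: "e \<in> betaN"
  shows "beta_closed {m \<in> betaN. uf_plus e m = e}"
proof -
  have "e \<noteq> {}" using e ultrafilter_UNIV by (auto simp: betaN_iff)
  moreover have "{m \<in> betaN. uf_plus e m = e} = (\<Inter>A\<in>e. beta_basic {n. set_minus_nat A n \<in> e})"
  proof (intro set_eqI iffI)
    fix m assume "m \<in> (\<Inter>A\<in>e. beta_basic {n. set_minus_nat A n \<in> e})"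
    with \<open>e \<noteq> {}\<close> have "m \<in> betaN" "e \<subseteq> uf_plus e m" by (auto simp: beta_basic_def uf_plus_iff)
    moreover have "is_ultrafilter (uf_plus e m)" using uf_plus_betaN[OF e \<open>m \<in> betaN\<close>] by (simp add: betaN_iff)
    ultimately show "m \<in> {m \<in> betaN. uf_plus e m = e}"
      using ultrafilter_subset_eq e by (auto simp: betaN_iff)
  next
    fix m assume m: "m \<in> {m \<in> betaN. uf_plus e m = e}"
    then have "A \<in> uf_plus e m" if "A \<in> e" for A using that by simp
    then show "m \<in> (\<Inter>A\<in>e. beta_basic {n. set_minus_nat A n \<in> e})"
      using m unfolding beta_basic_def uf_plus_iff by blast
  qed
  ultimately show ?thesis by (auto intro: beta_closed_Inter beta_closed_basic)
qed

definition plus_closed :: "nat set set set \<Rightarrow> bool" where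
  "plus_closed T \<longleftrightarrow> (\<forall>p\<in>T. \<forall>q\<in>T. uf_plus p q \<in> T)"

lemma minimal_closed_subsemigroup:
  assumes "beta_closed T" "T \<noteq> {}" "plus_closed T"
  obtains M where "M \<subseteq> T" "M \<noteq> {}" "beta_closed M" "plus_closed M"
    and "\<And>X. X \<subseteq> M \<Longrightarrow> X \<noteq> {} \<Longrightarrow> beta_closed X \<Longrightarrow> plus_closed X \<Longrightarrow> X = M"
proof -
  define \<A> where "\<A> = {M. M \<subseteq> T \<and> M \<noteq> {} \<and> beta_closed M \<and> plus_closed M}"
  have "\<A> \<noteq> {}" using assms unfolding \<A>_def by blast
  moreover have "\<Inter>\<C> \<in> \<A>" if ne: "\<C> \<noteq> {}" and chain: "subset.chain \<A> \<C>" for \<C>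
  proof -
    have "\<C> \<subseteq> \<A>" using chain by (simp add: subset_chain_def)
    then have "\<Inter>\<C> \<noteq> {}" "beta_closed (\<Inter>\<C>)"
      using beta_closed_chain_Inter_nonempty[OF ne chain] beta_closed_Inter[OF ne] unfolding \<A>_def by blast+
    moreover have "\<Inter>\<C> \<subseteq> T" "plus_closed (\<Inter>\<C>)"
      using \<open>\<C> \<subseteq> \<A>\<close> ne unfolding \<A>_def plus_closed_def by blast+
    ultimately show "\<Inter>\<C> \<in> \<A>" unfolding \<A>_def by blast
  qed
  ultimately have "\<exists>M\<in>\<A>. \<forall>X\<in>\<A>. X \<subseteq> M \<longrightarrow> X = M" by (rule Zorn_minimal)
  then obtain M where "M \<in> \<A>" and minimal: "\<forall>X\<in>\<A>. X \<subseteq> M \<longrightarrow> X = M" ..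
  then have M: "M \<subseteq> T" "M \<noteq> {}" "beta_closed M" "plus_closed M" unfolding \<A>_def by blast+
  have "X = M" if "X \<subseteq> M" "X \<noteq> {}" "beta_closed X" "plus_closed X" for X
    using minimal that M(1) unfolding \<A>_def by blast
  with M show thesis by (rule that)
qed

lemma Ellis_Numakura:
  assumes "beta_closed T" "T \<noteq> {}" "plus_closed T"
  obtains e where "e \<in> T" "uf_plus e e = e"
proof -
  obtain M where M: "M \<subseteq> T" "M \<noteq> {}" "beta_closed M" "plus_closed M"
    and minimal: "\<And>X. X \<subseteq> M \<Longrightarrow> X \<noteq> {} \<Longrightarrow> beta_closed X \<Longrightarrow> plus_closed X \<Longrightarrow> X = M"
    using minimal_closed_subsemigroup[OF assms] by blast
  then obtain e where e: "e \<in> M" by blast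
  have MB: "M \<subseteq> betaN" using M(3) by (rule beta_closed_subset)
  then have eB: "e \<in> betaN" using e by blast
  have "uf_plus e ` M = M"
  proof (rule minimal)
    show "uf_plus e ` M \<subseteq> M" "uf_plus e ` M \<noteq> {}" using M e unfolding plus_closed_def by blast+
    show "beta_closed (uf_plus e ` M)" using eB M(3) by (rule beta_closed_left_translate)
    show "plus_closed (uf_plus e ` M)"
      unfolding plus_closed_def
    proof (intro ballI)
      fix p q assume "p \<in> uf_plus e ` M" "q \<in> uf_plus e ` M"
      then obtain m m' where "m \<in> M" "m' \<in> M" "p = uf_plus e m" "q = uf_plus e m'" by blast
      then show "uf_plus p q \<in> uf_plus e ` M"
        using M(4) e uf_plus_assoc unfolding plus_closed_def by (metis image_eqI)
    qed
  qed
  then have "e \<in> uf_plus e ` M" using e by simp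
  then obtain m where "m \<in> M" "uf_plus e m = e" by blast
  define S where "S = M \<inter> {m \<in> betaN. uf_plus e m = e}"
  have "S = M"
  proof (rule minimal)
    show "S \<subseteq> M" unfolding S_def by blast
    show "S \<noteq> {}" using \<open>m \<in> M\<close> \<open>uf_plus e m = e\<close> MB unfolding S_def by blast
    show "beta_closed S"
      unfolding S_def using M(3) beta_closed_left_fixers[OF eB] by (rule beta_closed_Int)
    show "plus_closed S"
      unfolding plus_closed_def
    proof (intro ballI)
      fix p q assume "p \<in> S" "q \<in> S"
      then show "uf_plus p q \<in> S"
        using M(4) uf_plus_assoc[of e p q] MB unfolding S_def plus_closed_def by auto
    qed
  qed
  with e have "uf_plus e e = e" unfolding S_def by blast
  with e M(1) show thesis by (intro that) blast+
qed

section \<open>Idempotents in the smallest ideal\<close>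

definition nonprincipal :: "nat set set \<Rightarrow> bool" where
  "nonprincipal p \<longleftrightarrow> (\<forall>n. p \<noteq> principal_uf n)"

lemma nonprincipal_ultrafilter_exists:
  obtains p where "p \<in> betaN" "nonprincipal p"
proof -
  have "finite_intersection_property {A. finite (- A)}"
    unfolding finite_intersection_property_def
  proof (intro allI impI)
    fix S :: "nat set set" assume "finite S" "S \<subseteq> {A. finite (- A)}"
    then have "finite (\<Union>(uminus ` S))" by auto
    moreover have "- \<Inter>S = \<Union>(uminus ` S)" by auto
    ultimately show "\<Inter>S \<noteq> {}" by (metis Compl_empty_eq infinite_UNIV_nat)
  qed
  then obtain U where U: "is_ultrafilter U" "{A. finite (- A)} \<subseteq> U"
    by (rule ultrafilter_extending_fip)
  have "U \<noteq> principal_uf n" for n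
  proof
    assume "U = principal_uf n"
    moreover have "- {n} \<in> U" using U(2) by auto
    ultimately show False by (simp add: principal_uf_def)
  qed
  then show thesis using U(1) by (intro that) (auto simp: betaN_iff nonprincipal_def)
qed

lemma nonprincipal_uf_plus:
  assumes "p \<in> betaN" "q \<in> betaN" "nonprincipal q"
  shows "nonprincipal (uf_plus p q)" "nonprincipal (uf_plus q p)"
proof -
  have P: "is_ultrafilter p" and Q: "is_ultrafilter q" using assms(1,2) by (simp_all add: betaN_iff)
  have finite_notin: "F \<notin> q" if "finite F" for F
    using nonprincipal_ultrafilter_finite_notin[OF Q _ that] assms(3) by (simp add: nonprincipal_def)
  have "set_minus_nat {m} n \<subseteq> {..m}" for m n by auto
  then have finite_shift: "finite (set_minus_nat {m} n)" for m n by (rule finite_subset) simp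
  show "nonprincipal (uf_plus p q)"
    unfolding nonprincipal_def
  proof (intro allI notI)
    fix m assume "uf_plus p q = principal_uf m"
    then have "{m} \<in> uf_plus p q" by (simp add: principal_uf_def)
    then have "{n. set_minus_nat {m} n \<in> p} \<in> q" by (simp add: uf_plus_iff)
    moreover have "{n. set_minus_nat {m} n \<in> p} \<subseteq> {..m}"
    proof
      fix n assume "n \<in> {n. set_minus_nat {m} n \<in> p}"
      then have "set_minus_nat {m} n \<noteq> {}" using ultrafilter_empty_notin[OF P] by auto
      then show "n \<in> {..m}" by auto
    qed
    ultimately show False using finite_notin[of "{..m}"] ultrafilter_mono[OF Q] by blast
  qed
  show "nonprincipal (uf_plus q p)"
    unfolding nonprincipal_def
  proof (intro allI notI)
    fix m assume "uf_plus q p = principal_uf m"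
    then have "{m} \<in> uf_plus q p" by (simp add: principal_uf_def)
    then have "{n. set_minus_nat {m} n \<in> q} \<in> p" by (simp add: uf_plus_iff)
    moreover have "{n. set_minus_nat {m} n \<in> q} = {}" using finite_notin finite_shift by blast
    ultimately show False using ultrafilter_empty_notin[OF P] by simp
  qed
qed

lemma two_sided_ideal_nonprincipal: "two_sided_ideal {p \<in> betaN. nonprincipal p}"
  unfolding two_sided_ideal_def
proof (intro conjI ballI)
  obtain p where "p \<in> betaN" "nonprincipal p" by (rule nonprincipal_ultrafilter_exists)
  then show "{p \<in> betaN. nonprincipal p} \<noteq> {}" by blast
  fix p q assume "p \<in> betaN" "q \<in> {p \<in> betaN. nonprincipal p}"
  then show "uf_plus p q \<in> {p \<in> betaN. nonprincipal p}" "uf_plus q p \<in> {p \<in> betaN. nonprincipal p}"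
    using nonprincipal_uf_plus uf_plus_betaN by auto
qed auto

lemma minimal_idempotentI:
  assumes "e \<in> K_betaN" "uf_plus e e = e"
  shows "minimal_idempotent e"
proof -
  have "e \<in> betaN" "nonprincipal e"
    using assms(1) two_sided_ideal_nonprincipal unfolding K_betaN_def by blast+
  then show ?thesis using assms unfolding minimal_idempotent_def nonprincipal_def by blast
qed

definition right_ideal :: "nat set set set \<Rightarrow> bool" where
  "right_ideal R \<longleftrightarrow> R \<subseteq> betaN \<and> R \<noteq> {} \<and> (\<forall>p\<in>R. \<forall>q\<in>betaN. uf_plus p q \<in> R)"

lemma beta_closed_right_ideal_translate:
  assumes "r \<in> betaN"
  shows "beta_closed (uf_plus r ` betaN)" "right_ideal (uf_plus r ` betaN)"
proof -
  show "beta_closed (uf_plus r ` betaN)"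
    using assms beta_closed_betaN by (rule beta_closed_left_translate)
  have "uf_plus (uf_plus r s) q \<in> uf_plus r ` betaN" if "s \<in> betaN" "q \<in> betaN" for s q
    using that uf_plus_betaN by (simp add: uf_plus_assoc)
  moreover have "betaN \<noteq> {}" using assms by blast
  ultimately show "right_ideal (uf_plus r ` betaN)"
    unfolding right_ideal_def using uf_plus_betaN[OF assms] by blast
qed

text \<open>A minimal closed right ideal lies in every two-sided ideal \<open>I\<close>: it meets \<open>I\<close>, and for
  \<open>r\<close> in the intersection, \<open>r + \<beta>\<nat>\<close> is a closed right ideal inside both.\<close>
lemma closed_right_ideal_in_K_betaN:
  obtains R where "beta_closed R" "right_ideal R" "R \<subseteq> K_betaN"
proof -
  define \<A> where "\<A> = {R. beta_closed R \<and> right_ideal R}"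
  obtain p where "p \<in> betaN" by (rule nonprincipal_ultrafilter_exists)
  then have "betaN \<in> \<A>"
    unfolding \<A>_def right_ideal_def using beta_closed_betaN uf_plus_betaN by blast
  then have "\<A> \<noteq> {}" by blast
  moreover have "\<Inter>\<C> \<in> \<A>" if ne: "\<C> \<noteq> {}" and chain: "subset.chain \<A> \<C>" for \<C>
  proof -
    have "\<C> \<subseteq> \<A>" using chain by (simp add: subset_chain_def)
    then have "\<Inter>\<C> \<noteq> {}" "beta_closed (\<Inter>\<C>)"
      using beta_closed_chain_Inter_nonempty[OF ne chain] beta_closed_Inter[OF ne]
      unfolding \<A>_def right_ideal_def by blast+
    moreover have "\<forall>p\<in>\<Inter>\<C>. \<forall>q\<in>betaN. uf_plus p q \<in> \<Inter>\<C>"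
      using \<open>\<C> \<subseteq> \<A>\<close> unfolding \<A>_def right_ideal_def by blast
    ultimately show "\<Inter>\<C> \<in> \<A>"
      unfolding \<A>_def right_ideal_def using beta_closed_subset by blast
  qed
  ultimately have "\<exists>R\<in>\<A>. \<forall>X\<in>\<A>. X \<subseteq> R \<longrightarrow> X = R" by (rule Zorn_minimal)
  then obtain R where "R \<in> \<A>" and minimal: "\<forall>X\<in>\<A>. X \<subseteq> R \<longrightarrow> X = R" ..
  then have R: "beta_closed R" "right_ideal R" unfolding \<A>_def by blast+
  have "R \<subseteq> I" if I: "two_sided_ideal I" for I
  proof -
    obtain p q where "p \<in> R" "q \<in> I" using R(2) I unfolding right_ideal_def two_sided_ideal_def by blast
    then have pq: "p \<in> betaN" "q \<in> betaN"
      using R(2) I unfolding right_ideal_def two_sided_ideal_def by blast+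
    define r where "r = uf_plus p q"
    have "r \<in> R" "r \<in> I"
      using R(2) I \<open>p \<in> R\<close> \<open>q \<in> I\<close> pq unfolding r_def right_ideal_def two_sided_ideal_def by blast+
    then have rB: "r \<in> betaN" using I unfolding two_sided_ideal_def by blast
    have "uf_plus r ` betaN \<subseteq> R" using R(2) \<open>r \<in> R\<close> unfolding right_ideal_def by blast
    then have "uf_plus r ` betaN = R"
      using minimal beta_closed_right_ideal_translate[OF rB] unfolding \<A>_def by blast
    moreover have "uf_plus r ` betaN \<subseteq> I" using I \<open>r \<in> I\<close> unfolding two_sided_ideal_def by blast
    ultimately show ?thesis by blast
  qed
  then have "R \<subseteq> K_betaN" unfolding K_betaN_def by blast
  with R show thesis by (intro that)
qed

section \<open>Uniformly recurrent words give central sets\<close>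

text \<open>Recurrence of all prefixes with bounded gaps; this is equivalent to the usual notion, since
  every factor lies inside a prefix.\<close>
definition uniformly_recurrent :: "(nat \<Rightarrow> 'a) \<Rightarrow> bool" where
  "uniformly_recurrent x \<longleftrightarrow> (\<forall>L. \<exists>g. \<forall>i. \<exists>j. i \<le> j \<and> j \<le> i + g \<and> (\<forall>t<L. x (j + t) = x t))"

lemma uniformly_recurrent_comp:
  assumes "uniformly_recurrent x"
  shows "uniformly_recurrent (\<lambda>n. f (x n))"
  unfolding uniformly_recurrent_def
proof
  fix L
  obtain g where "\<forall>i. \<exists>j. i \<le> j \<and> j \<le> i + g \<and> (\<forall>t<L. x (j + t) = x t)"
    using assms unfolding uniformly_recurrent_def by blast
  then show "\<exists>g. \<forall>i. \<exists>j. i \<le> j \<and> j \<le> i + g \<and> (\<forall>t<L. f (x (j + t)) = f (x t))"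
    by fastforce
qed

text \<open>With \<open>z k\<close> the \<open>p\<close>-limit of \<open>y (n + k)\<close>, every prefix of \<open>y\<close> occurs in \<open>z\<close>: the window of \<open>z\<close> of
  length \<open>g + L\<close> is a window of \<open>y\<close>, which contains an occurrence of the prefix of length \<open>L\<close>.\<close>
lemma ultrafilter_limit_contains_prefix:
  fixes y :: "nat \<Rightarrow> bool"
  assumes "uniformly_recurrent y" and P: "is_ultrafilter p"
  obtains m where "\<And>t. t < L \<Longrightarrow> {n. y (n + (m + t)) = y t} \<in> p"
proof -
  obtain g where g: "\<forall>i. \<exists>j. i \<le> j \<and> j \<le> i + g \<and> (\<forall>t<L. y (j + t) = y t)"
    using assms(1) unfolding uniformly_recurrent_def by blast
  define z where "z k \<longleftrightarrow> {n. y (n + k)} \<in> p" for k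
  have z: "{n. y (n + k) = z k} \<in> p" for k
  proof (cases "z k")
    case True
    then show ?thesis unfolding z_def by simp
  next
    case False
    then have "- {n. y (n + k)} \<in> p" unfolding z_def using ultrafilter_Compl_iff[OF P] by blast
    moreover have "- {n. y (n + k)} = {n. y (n + k) = z k}" using False by auto
    ultimately show ?thesis by simp
  qed
  have "(\<Inter>k<g + L. {n. y (n + k) = z k}) \<in> p"
    using z by (intro ultrafilter_Inter[OF P]) auto
  then obtain n0 where "n0 \<in> (\<Inter>k<g + L. {n. y (n + k) = z k})"
    using ultrafilter_empty_notin[OF P] by (metis equals0I)
  then have n0: "y (n0 + k) = z k" if "k < g + L" for k using that by blast
  obtain j where j: "n0 \<le> j" "j \<le> n0 + g" "\<And>t. t < L \<Longrightarrow> y (j + t) = y t"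
    using g by blast
  have "{n. y (n + (j - n0 + t)) = y t} \<in> p" if "t < L" for t
  proof -
    have "z (j - n0 + t) = y t" using n0[of "j - n0 + t"] j that by simp
    then show ?thesis using z[of "j - n0 + t"] by simp
  qed
  then show thesis by (rule that)
qed

text \<open>The ultrafilters \<open>q\<close> along which the shifts of \<open>x\<close> converge to \<open>x\<close> itself.\<close>
definition shift_limit_fixers :: "(nat \<Rightarrow> 'a) \<Rightarrow> nat set set set" where
  "shift_limit_fixers x = {q \<in> betaN. \<forall>k. {n. x (n + k) = x k} \<in> q}"

lemma beta_closed_shift_limit_fixers: "beta_closed (shift_limit_fixers x)"
proof -
  have "shift_limit_fixers x = (\<Inter>k. beta_basic {n. x (n + k) = x k})"
    unfolding shift_limit_fixers_def beta_basic_def by blast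
  then show ?thesis by (auto intro: beta_closed_Inter beta_closed_basic)
qed

lemma plus_closed_shift_limit_fixers: "plus_closed (shift_limit_fixers x)"
  unfolding plus_closed_def
proof (intro ballI)
  fix a b assume a: "a \<in> shift_limit_fixers x" and b: "b \<in> shift_limit_fixers x"
  then have B: "is_ultrafilter b" unfolding shift_limit_fixers_def by (simp add: betaN_iff)
  have "{n. x (n + k) = x k} \<in> uf_plus a b" for k
  proof -
    have "set_minus_nat {n. x (n + k) = x k} m \<in> a" if "x (m + k) = x k" for m
    proof -
      have "set_minus_nat {n. x (n + k) = x k} m = {n. x (n + (m + k)) = x (m + k)}"
        using that by (auto simp: add.assoc)
      then show ?thesis using a unfolding shift_limit_fixers_def by simp
    qed
    then have "{m. x (m + k) = x k} \<subseteq> {m. set_minus_nat {n. x (n + k) = x k} m \<in> a}" by blast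
    moreover have "{m. x (m + k) = x k} \<in> b" using b unfolding shift_limit_fixers_def by blast
    ultimately show ?thesis unfolding uf_plus_iff using ultrafilter_mono[OF B] by blast
  qed
  moreover have "uf_plus a b \<in> betaN"
    using a b uf_plus_betaN unfolding shift_limit_fixers_def by blast
  ultimately show "uf_plus a b \<in> shift_limit_fixers x" unfolding shift_limit_fixers_def by blast
qed

lemma shift_limit_fixer_in_right_translate:
  fixes y :: "nat \<Rightarrow> bool"
  assumes "uniformly_recurrent y" "p \<in> betaN"
  obtains r where "r \<in> betaN" "uf_plus p r \<in> shift_limit_fixers y"
proof -
  have P: "is_ultrafilter p" using assms(2) by (simp add: betaN_iff)
  define B where "B L = {m. \<forall>t<L. {n. y (n + (m + t)) = y t} \<in> p}" for L
  have "finite_intersection_property (range B)"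
    unfolding finite_intersection_property_def
  proof (intro allI impI)
    fix S assume "finite S" "S \<subseteq> range B"
    then obtain Ls where "finite Ls" "S = B ` Ls" by (meson finite_subset_image)
    then obtain N where "\<forall>L\<in>Ls. L \<le> N" using finite_nat_set_iff_bounded_le by blast
    then have "B N \<subseteq> \<Inter>S" using \<open>S = B ` Ls\<close> unfolding B_def by auto
    moreover obtain m where "\<And>t. t < N \<Longrightarrow> {n. y (n + (m + t)) = y t} \<in> p"
      using ultrafilter_limit_contains_prefix[OF assms(1) P] by blast
    then have "m \<in> B N" unfolding B_def by blast
    ultimately show "\<Inter>S \<noteq> {}" by blast
  qed
  then obtain r where r: "is_ultrafilter r" "range B \<subseteq> r" by (rule ultrafilter_extending_fip)
  have "{n. y (n + k) = y k} \<in> uf_plus p r" for k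
  proof -
    have "set_minus_nat {n. y (n + k) = y k} m = {n. y (n + (m + k)) = y k}" for m
      by (auto simp: add.assoc)
    then have "B (Suc k) \<subseteq> {m. set_minus_nat {n. y (n + k) = y k} m \<in> p}"
      unfolding B_def by auto
    then show ?thesis unfolding uf_plus_iff using r ultrafilter_mono[OF r(1)] by blast
  qed
  moreover have "r \<in> betaN" using r(1) by (simp add: betaN_iff)
  ultimately show thesis
    using assms(2) uf_plus_betaN by (intro that) (auto simp: shift_limit_fixers_def)
qed

theorem central_if_uniformly_recurrent:
  fixes y :: "nat \<Rightarrow> bool"
  assumes "uniformly_recurrent y" "y 0"
  shows "central {n. y n}"
proof -
  obtain R where R: "beta_closed R" "right_ideal R" "R \<subseteq> K_betaN"
    by (rule closed_right_ideal_in_K_betaN)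
  then obtain p where "p \<in> R" "p \<in> betaN" unfolding right_ideal_def by blast
  obtain r where "r \<in> betaN" "uf_plus p r \<in> shift_limit_fixers y"
    using shift_limit_fixer_in_right_translate[OF assms(1) \<open>p \<in> betaN\<close>] by blast
  define T where "T = R \<inter> shift_limit_fixers y"
  have "beta_closed T"
    unfolding T_def using R(1) beta_closed_shift_limit_fixers by (rule beta_closed_Int)
  moreover have "T \<noteq> {}" using R(2) \<open>p \<in> R\<close> \<open>r \<in> betaN\<close> \<open>uf_plus p r \<in> shift_limit_fixers y\<close>
    unfolding T_def right_ideal_def by blast
  moreover have "plus_closed T"
    using R(2) plus_closed_shift_limit_fixers beta_closed_subset[OF beta_closed_shift_limit_fixers]
    unfolding T_def plus_closed_def right_ideal_def by blast
  ultimately obtain e where e: "e \<in> T" "uf_plus e e = e" by (rule Ellis_Numakura)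
  then have "minimal_idempotent e" using R(3) unfolding T_def by (intro minimal_idempotentI) blast+
  moreover have "{n. y (n + 0) = y 0} \<in> e" using e(1) unfolding T_def shift_limit_fixers_def by blast
  ultimately show ?thesis unfolding central_def using assms(2) by auto
qed

section \<open>Iterated palindromic closure\<close>

lemma
  shows is_pal_pal_closure: "is_pal (pal_closure w)"
    and prefix_pal_closure: "prefix w (pal_closure w)"
    and pal_closure_shortest: "is_pal p \<Longrightarrow> prefix w p \<Longrightarrow> length (pal_closure w) \<le> length p"
proof -
  let ?P = "\<lambda>p. is_pal p \<and> prefix w p"
  have "?P (w @ rev w)" by (simp add: is_pal_def)
  from arg_min_nat_lemma[of ?P, OF this, of length]
  show "is_pal (pal_closure w)" "prefix w (pal_closure w)"
    and "is_pal p \<Longrightarrow> prefix w p \<Longrightarrow> length (pal_closure w) \<le> length p"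
    unfolding pal_closure_def by auto
qed

lemma set_pal_closure: "set (pal_closure w) \<subseteq> set w"
proof -
  obtain v where v: "pal_closure w = w @ v"
    using prefix_pal_closure[of w] unfolding prefix_def by blast
  have "length (pal_closure w) \<le> length (w @ rev w)"
    by (rule pal_closure_shortest) (auto simp: is_pal_def)
  then have "length v \<le> length w" using v by simp
  have "rev v @ rev w = w @ v" using is_pal_pal_closure[of w] v by (simp add: is_pal_def)
  then have "rev v = take (length v) w"
    using \<open>length v \<le> length w\<close> by (metis append_eq_append_conv_if length_rev take_all_iff)
  then have "set v \<subseteq> set w" by (metis set_rev set_take_subset)
  then show ?thesis using v by auto
qed

text \<open>\<open>psi_prefix D n\<close> is \<open>\<psi>(\<Delta>\<^sub>0 \<cdots> \<Delta>\<^sub>n\<^sub>-\<^sub>1)\<close>.\<close>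
fun psi_prefix :: "(nat \<Rightarrow> 'a) \<Rightarrow> nat \<Rightarrow> 'a list" where
  "psi_prefix D 0 = []"
| "psi_prefix D (Suc n) = pal_closure (psi_prefix D n @ [D n])"

lemma psi_fin_eq_psi_prefix: "psi_fin (map D [0..<n]) = psi_prefix D n"
  by (induction n) (simp_all add: psi_fin_def)

lemma is_pal_psi_prefix: "is_pal (psi_prefix D n)"
  by (cases n) (simp_all add: is_pal_pal_closure is_pal_def[of "[]"])

lemma prefix_psi_prefix_Suc: "prefix (psi_prefix D n @ [D n]) (psi_prefix D (Suc n))"
  by (simp add: prefix_pal_closure)

lemma length_psi_prefix_Suc_le: "length (psi_prefix D (Suc n)) \<le> 2 * length (psi_prefix D n) + 1"
proof -
  have "is_pal (psi_prefix D n @ [D n] @ psi_prefix D n)"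
    using is_pal_psi_prefix[of D n] by (simp add: is_pal_def)
  then have "length (pal_closure (psi_prefix D n @ [D n])) \<le> length (psi_prefix D n @ [D n] @ psi_prefix D n)"
    by (intro pal_closure_shortest) simp_all
  then show ?thesis by simp
qed

lemma length_psi_prefix_ge: "n \<le> length (psi_prefix D n)"
proof (induction n)
  case (Suc n)
  then show ?case using prefix_length_le[OF prefix_psi_prefix_Suc[of D n]] by simp
qed simp

lemma prefix_psi_prefix_mono:
  assumes "n \<le> m"
  shows "prefix (psi_prefix D n) (psi_prefix D m)"
  using assms
proof (induction m rule: dec_induct)
  case (step m)
  have "prefix (psi_prefix D m) (psi_prefix D m @ [D m])" by (rule prefixI) (rule refl)
  then have "prefix (psi_prefix D m) (psi_prefix D (Suc m))"
    using prefix_psi_prefix_Suc by (rule prefix_order.order_trans)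
  with step.IH show ?case by (rule prefix_order.order_trans)
qed simp

lemma set_psi_prefix: "set (psi_prefix D n) \<subseteq> D ` {..<n}"
proof (induction n)
  case (Suc n)
  have "set (psi_prefix D (Suc n)) \<subseteq> set (psi_prefix D n @ [D n])"
    using set_pal_closure[of "psi_prefix D n @ [D n]"] by simp
  also have "\<dots> \<subseteq> D ` {..<Suc n}" using Suc.IH by auto
  finally show ?case .
qed simp

lemma prefix_nth: "prefix u w \<Longrightarrow> t < length u \<Longrightarrow> w ! t = u ! t"
  by (auto simp: prefix_def nth_append)

lemma prefix_drop_prefix: "prefix A B \<Longrightarrow> prefix Q (drop j A) \<Longrightarrow> prefix Q (drop j B)"
  by (auto simp: prefix_def drop_append)

lemma prefix_drop_suffix:
  "suffix A B \<Longrightarrow> prefix Q (drop j A) \<Longrightarrow> prefix Q (drop (length B - length A + j) B)"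
  by (auto simp: suffix_def)

definition occurs_densely :: "'a list \<Rightarrow> 'a list \<Rightarrow> bool" where
  "occurs_densely Q A \<longleftrightarrow>
    (\<forall>i. i + length Q \<le> length A \<longrightarrow> (\<exists>j. i \<le> j \<and> j \<le> i + length Q \<and> prefix Q (drop j A)))"

lemma occurs_denselyD:
  "occurs_densely Q A \<Longrightarrow> i + length Q \<le> length A \<Longrightarrow>
    \<exists>j. i \<le> j \<and> j \<le> i + length Q \<and> prefix Q (drop j A)"
  by (simp add: occurs_densely_def)

lemma occurs_densely_prefix_suffix:
  assumes dense: "occurs_densely Q A" and "prefix Q A" "prefix A B" "suffix A B"
    and "length B \<le> 2 * length A + 1"
  shows "occurs_densely Q B"
  unfolding occurs_densely_def
proof (intro allI impI)
  fix i assume iB: "i + length Q \<le> length B"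
  define s where "s = length B - length A"
  have "length A \<le> length B" using \<open>prefix A B\<close> by (rule prefix_length_le)
  show "\<exists>j. i \<le> j \<and> j \<le> i + length Q \<and> prefix Q (drop j B)"
  proof (cases "i + length Q \<le> length A")
    case True
    then show ?thesis using occurs_denselyD[OF dense] prefix_drop_prefix[OF \<open>prefix A B\<close>] by blast
  next
    case False
    show ?thesis
    proof (cases "s \<le> i")
      case True
      have "i - s + length Q \<le> length A"
        using iB True \<open>length A \<le> length B\<close> unfolding s_def by arith
      then obtain j where "i - s \<le> j" "j \<le> i - s + length Q" "prefix Q (drop j A)"
        using occurs_denselyD[OF dense] by blast
      then show ?thesis using True prefix_drop_suffix[OF \<open>suffix A B\<close>, of Q j]
        by (intro exI[of _ "s + j"]) (auto simp: s_def)
    next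
      case False
      \<comment> \<open>The second copy of \<open>A\<close> starts inside the window, at most one letter after the first ends.\<close>
      have "prefix Q (drop 0 A)" using \<open>prefix Q A\<close> by simp
      then show ?thesis using False \<open>\<not> i + length Q \<le> length A\<close> assms(5)
          prefix_drop_suffix[OF \<open>suffix A B\<close>, of Q 0]
        by (intro exI[of _ s]) (auto simp: s_def)
    qed
  qed
qed

lemma occurs_densely_psi_prefix:
  assumes "n \<le> k"
  shows "occurs_densely (psi_prefix D n) (psi_prefix D k)"
  using assms
proof (induction k rule: dec_induct)
  case base
  show ?case unfolding occurs_densely_def by (intro allI impI exI[of _ 0]) simp
next
  case (step k)
  have AB: "prefix (psi_prefix D k) (psi_prefix D (Suc k))" by (rule prefix_psi_prefix_mono) simp
  then have "suffix (psi_prefix D k) (psi_prefix D (Suc k))"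
    using is_pal_psi_prefix[of D k] is_pal_psi_prefix[of D "Suc k"]
    unfolding is_pal_def by (metis suffix_to_prefix)
  moreover have "prefix (psi_prefix D n) (psi_prefix D k)" using step.hyps(1) by (rule prefix_psi_prefix_mono)
  ultimately show ?case
    using occurs_densely_prefix_suffix[OF step.IH _ AB _ length_psi_prefix_Suc_le] by blast
qed

lemma psi_inf_nth:
  assumes "k < length (psi_prefix D N)"
  shows "psi_inf D k = psi_prefix D N ! k"
proof -
  have agree: "\<forall>\<^sub>F n in sequentially. k < length (psi_prefix D (Suc n)) \<and> psi_prefix D (Suc n) ! k = psi_prefix D N ! k"
  proof (rule eventually_sequentiallyI[of N])
    fix n assume "N \<le> n"
    then have "prefix (psi_prefix D N) (psi_prefix D (Suc n))" by (intro prefix_psi_prefix_mono) simp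
    then show "k < length (psi_prefix D (Suc n)) \<and> psi_prefix D (Suc n) ! k = psi_prefix D N ! k"
      using assms by (metis order_less_le_trans prefix_length_le prefix_nth)
  qed
  show ?thesis
    unfolding psi_inf_def psi_fin_eq_psi_prefix
  proof (rule the_equality)
    fix c
    assume "\<forall>\<^sub>F n in sequentially. k < length (psi_prefix D (Suc n)) \<and> psi_prefix D (Suc n) ! k = c"
    with agree have "\<forall>\<^sub>F n in sequentially. c = psi_prefix D N ! k" by eventually_elim auto
    then show "c = psi_prefix D N ! k" by simp
  qed (fact agree)
qed

lemma psi_inf_psi_prefix_length: "psi_inf D (length (psi_prefix D n)) = D n"
proof -
  have "prefix (psi_prefix D n @ [D n]) (psi_prefix D (Suc n))" by (rule prefix_psi_prefix_Suc)
  then have "length (psi_prefix D n) < length (psi_prefix D (Suc n))"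
    "psi_prefix D (Suc n) ! length (psi_prefix D n) = D n"
    by (auto dest: prefix_length_le simp: prefix_nth)
  then show ?thesis using psi_inf_nth by metis
qed

lemma psi_inf_in_range: "psi_inf D k \<in> range D"
proof -
  have "k < length (psi_prefix D (Suc k))" using length_psi_prefix_ge[of "Suc k" D] by simp
  then have "psi_inf D k = psi_prefix D (Suc k) ! k"
    and "psi_prefix D (Suc k) ! k \<in> set (psi_prefix D (Suc k))"
    by (rule psi_inf_nth, rule nth_mem)
  then have "psi_inf D k \<in> D ` {..<Suc k}" using set_psi_prefix[of D "Suc k"] by auto
  then show ?thesis by blast
qed

lemma uniformly_recurrent_psi_inf: "uniformly_recurrent (psi_inf D)"
  unfolding uniformly_recurrent_def
proof
  fix L
  let ?Q = "psi_prefix D L"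
  have "\<exists>j. i \<le> j \<and> j \<le> i + length ?Q \<and> (\<forall>t<L. psi_inf D (j + t) = psi_inf D t)" for i
  proof -
    define k where "k = L + i + length ?Q"
    have "i + length ?Q \<le> length (psi_prefix D k)"
      using length_psi_prefix_ge[of k D] unfolding k_def by simp
    moreover have "occurs_densely ?Q (psi_prefix D k)" unfolding k_def by (rule occurs_densely_psi_prefix) simp
    ultimately obtain j where j: "i \<le> j" "j \<le> i + length ?Q" "prefix ?Q (drop j (psi_prefix D k))"
      using occurs_denselyD by blast
    have "psi_inf D (j + t) = psi_inf D t" if "t < L" for t
    proof -
      have "t < length ?Q" using that length_psi_prefix_ge[of L D] by simp
      then have "j + t < length (psi_prefix D k)" "psi_prefix D k ! (j + t) = ?Q ! t"
        using prefix_nth[OF j(3)] prefix_length_le[OF j(3)] by auto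
      then show ?thesis using psi_inf_nth[of "j + t" D k] psi_inf_nth[OF \<open>t < length ?Q\<close>] by simp
    qed
    then show ?thesis using j(1,2) by blast
  qed
  then show "\<exists>g. \<forall>i. \<exists>j. i \<le> j \<and> j \<le> i + g \<and> (\<forall>t<L. psi_inf D (j + t) = psi_inf D t)"
    by blast
qed

lemma uniformly_recurrent_if_prefixes_occur:
  assumes "uniformly_recurrent x" and occurs: "\<And>L. \<exists>m. \<forall>t<L. x (m + t) = y t"
  shows "uniformly_recurrent y"
  unfolding uniformly_recurrent_def
proof
  fix L
  obtain m where m: "\<forall>t<L. x (m + t) = y t" using occurs by blast
  obtain g where g: "\<forall>i. \<exists>j. i \<le> j \<and> j \<le> i + g \<and> (\<forall>t<m + L. x (j + t) = x t)"
    using assms(1) unfolding uniformly_recurrent_def by blast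
  have "\<exists>j. i \<le> j \<and> j \<le> i + (g + m) \<and> (\<forall>t<L. y (j + t) = y t)" for i
  proof -
    \<comment> \<open>Read a long prefix of \<open>y\<close> inside \<open>x\<close> at \<open>m'\<close>, and find the prefix of \<open>x\<close> of length \<open>m + L\<close> there.\<close>
    obtain m' where m': "\<forall>t<i + g + m + L. x (m' + t) = y t" using occurs by blast
    obtain j' where j': "m' + i \<le> j'" "j' \<le> m' + i + g" "\<forall>t<m + L. x (j' + t) = x t"
      using g by blast
    have "y (j' - m' + m + t) = y t" if "t < L" for t
    proof -
      have "y (j' - m' + m + t) = x (m' + (j' - m' + m + t))" using m' j'(2) that by simp
      also have "\<dots> = x (j' + (m + t))" using j'(1) by (simp add: algebra_simps)
      also have "\<dots> = x (m + t)" using j'(3) that by simp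
      finally show ?thesis using m that by simp
    qed
    then show ?thesis using j' by (intro exI[of _ "j' - m' + m"]) auto
  qed
  then show "\<exists>g. \<forall>i. \<exists>j. i \<le> j \<and> j \<le> i + g \<and> (\<forall>t<L. y (j + t) = y t)" by blast
qed

lemma prefixes_of_prepend_occur:
  assumes "infinite {n. D n = a}"
  shows "\<exists>m. \<forall>t<L. psi_inf D (m + t) = prepend a (psi_inf D) t"
proof -
  obtain n where n: "L \<le> n" "D n = a" using assms unfolding infinite_nat_iff_unbounded_le by blast
  define W where "W = psi_prefix D (Suc n)"
  define u where "u = a # psi_prefix D n"
  have "prefix (rev u) W" unfolding W_def u_def
    using prefix_psi_prefix_Suc[of D n] is_pal_psi_prefix[of D n] n(2) by (simp add: is_pal_def)
  then have "suffix u W"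
    using is_pal_psi_prefix[of D "Suc n"] unfolding W_def is_pal_def by (metis suffix_to_prefix rev_rev_ident)
  have "psi_inf D (length W - length u + t) = u ! t" if "t < length u" for t
  proof -
    have "length W - length u + t < length W" "W ! (length W - length u + t) = u ! t"
      using \<open>suffix u W\<close> that by (auto simp: suffix_def nth_append)
    then show ?thesis unfolding W_def using psi_inf_nth by metis
  qed
  moreover have "prepend a (psi_inf D) t = u ! t" if "t < length u" for t
    using that psi_inf_nth[of _ D n] unfolding prepend_def u_def by (cases t) (simp_all add: n(2))
  moreover have "L < length u" using n(1) length_psi_prefix_ge[of n D] unfolding u_def by simp
  ultimately show ?thesis by (intro exI[of _ "length W - length u"]) auto
qed

lemma uniformly_recurrent_prepend_psi_inf:
  assumes "infinite {n. D n = a}"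
  shows "uniformly_recurrent (prepend a (psi_inf D))"
  using uniformly_recurrent_psi_inf prefixes_of_prepend_occur[OF assms]
  by (rule uniformly_recurrent_if_prefixes_occur)

lemma central_Diff_finite:
  assumes "central A" "finite F"
  shows "central (A - F)"
proof -
  obtain p where p: "minimal_idempotent p" "A \<in> p" using assms(1) unfolding central_def by blast
  then have P: "is_ultrafilter p" and "F \<notin> p"
    using nonprincipal_ultrafilter_finite_notin[OF _ _ assms(2)]
    unfolding minimal_idempotent_def betaN_iff by blast+
  then have "A \<inter> - F \<in> p" using p(2) ultrafilter_Int ultrafilter_Compl_iff by blast
  then show ?thesis using p(1) unfolding central_def by (metis Diff_eq)
qed

lemma image_Suc_occ: "(\<lambda>b. b + 1) ` occ x a = occ (prepend a x) a - {0}"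
proof (intro set_eqI iffI)
  fix m assume "m \<in> occ (prepend a x) a - {0}"
  then obtain k where "m = Suc k" "x k = a" by (cases m) (auto simp: occ_def prepend_def)
  then show "m \<in> (\<lambda>b. b + 1) ` occ x a" by (auto simp: occ_def)
qed (auto simp: occ_def prepend_def)

lemma image_Suc_occ_disjoint:
  "a \<noteq> b \<Longrightarrow> (\<lambda>b. b + 1) ` occ x a \<inter> (\<lambda>b. b + 1) ` occ x b = {}"
  by (auto simp: occ_def)

lemma UN_image_Suc_occ:
  assumes "\<And>k. x k \<in> Alph"
  shows "(\<Union>a\<in>Alph. (\<lambda>b. b + 1) ` occ x a) = {0<..}"
proof (intro set_eqI iffI)
  fix m :: nat assume "m \<in> {0<..}"
  then obtain k where "m = Suc k" by (cases m) auto
  then show "m \<in> (\<Union>a\<in>Alph. (\<lambda>b. b + 1) ` occ x a)" using assms[of k] by (auto simp: occ_def)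
qed auto

lemma inj_on_image_Suc_occ:
  assumes "\<And>a. a \<in> Alph \<Longrightarrow> occ x a \<noteq> {}"
  shows "inj_on (\<lambda>a. (\<lambda>b. b + 1) ` occ x a) Alph"
proof (rule inj_onI)
  fix a b assume "a \<in> Alph" "b \<in> Alph" and eq: "(\<lambda>b. b + 1) ` occ x a = (\<lambda>b. b + 1) ` occ x b"
  show "a = b"
  proof (rule ccontr)
    assume "a \<noteq> b"
    then have "(\<lambda>b. b + 1) ` occ x a = {}" using image_Suc_occ_disjoint[of a b x] eq by simp
    then show False using assms \<open>a \<in> Alph\<close> by simp
  qed
qed

lemma central_occ_prepend_psi_inf:
  assumes "infinite {n. D n = a}"
  shows "central (occ (prepend a (psi_inf D)) a)"
proof -
  have "uniformly_recurrent (\<lambda>n. prepend a (psi_inf D) n = a)"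
    using uniformly_recurrent_prepend_psi_inf[OF assms] by (rule uniformly_recurrent_comp)
  then have "central {n. prepend a (psi_inf D) n = a}"
    by (rule central_if_uniformly_recurrent) (simp add: prepend_def)
  then show ?thesis unfolding occ_def .
qed

theorem mainTheorem19:
  fixes Alph :: "'a set" and D :: "nat \<Rightarrow> 'a"
  assumes "infinite Alph"
    and "\<And>n. D n \<in> Alph"
    and "\<And>a. a \<in> Alph \<Longrightarrow> infinite {n. D n = a}"
  shows "(\<forall>a\<in>Alph. central (occ (prepend a (psi_inf D)) a))
    \<and> (\<Union>a\<in>Alph. (\<lambda>b. b + 1) ` occ (psi_inf D) a) = {0<..}
    \<and> (\<forall>a\<in>Alph. \<forall>b\<in>Alph. a \<noteq> b \<longrightarrow>
          (\<lambda>b. b + 1) ` occ (psi_inf D) a \<inter> (\<lambda>b. b + 1) ` occ (psi_inf D) b = {})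
    \<and> (\<forall>a\<in>Alph. (\<lambda>b. b + 1) ` occ (psi_inf D) a \<noteq> {})
    \<and> infinite ((\<lambda>a. (\<lambda>b. b + 1) ` occ (psi_inf D) a) ` Alph)
    \<and> (\<forall>a\<in>Alph. central ((\<lambda>b. b + 1) ` occ (psi_inf D) a))"
proof -
  have central: "central (occ (prepend a (psi_inf D)) a)" if "a \<in> Alph" for a
    using assms(3)[OF that] by (rule central_occ_prepend_psi_inf)
  have letters: "psi_inf D k \<in> Alph" for k
    using psi_inf_in_range[of D k] assms(2) by auto
  have occurs: "occ (psi_inf D) a \<noteq> {}" if "a \<in> Alph" for a
  proof -
    have "{n. D n = a} \<noteq> {}" using assms(3)[OF that] by (intro notI) simp
    then obtain n where "D n = a" by blast
    then show ?thesis using psi_inf_psi_prefix_length[of D n] by (auto simp: occ_def)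
  qed
  have "infinite ((\<lambda>a. (\<lambda>b. b + 1) ` occ (psi_inf D) a) ` Alph)"
    using assms(1) inj_on_image_Suc_occ[OF occurs] finite_imageD by blast
  moreover have "central ((\<lambda>b. b + 1) ` occ (psi_inf D) a)" if "a \<in> Alph" for a
    unfolding image_Suc_occ using central_Diff_finite[OF central[OF that], of "{0}"] by simp
  ultimately show ?thesis
    using central occurs UN_image_Suc_occ[OF letters] image_Suc_occ_disjoint
    by (intro conjI ballI impI) simp_all
qed

end
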